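(* Let $G$ be a semi-perfect graph and let $k$ be a positive integer. The following statements are equivalent: (a) $G$ has a $k$-tight clique partition; (b) $G$ has a $k$-tight $\alpha$-clique partition; (c) every $\alpha$-clique partition of $G$ is $k$-tight; (d) $\mu_\alpha(G)\le k-1$.
   Context: All graphs are finite, simple and undirected. For a graph $G$, $\alpha(G)$ is the maximum size of an independent set and $i(G)$ is the minimum size of a maximal (with respect to inclusion) independent set; the independence gap is $\mu_\alpha(G)=\alpha(G)-i(G)$. $\theta(G)$ denotes the minimum number of cliques whose union is $V(G)$. A graph $G$ is semi-perfect if $\alpha(G)=\theta(G)$. A clique partition of $G$ is a set of pairwise disjoint cliques whose union is $V(G)$; an $\alpha$-clique partition is a clique partition consisting of exactly $\alpha(G)$ cliques. For a positive integer $k$, a clique partition of $G$ is $k$-tight if for every $k$ cliques of the partition, their union intersects every maximal independent set of $G$. *)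

theory Defs
  imports Main
begin

text \<open>A finite simple graph is given by a finite vertex set V and a symmetric,
irreflexive adjacency relation E (only its restriction to V matters).\<close>

definition simple_graph :: "'a set \<Rightarrow> ('a \<Rightarrow> 'a \<Rightarrow> bool) \<Rightarrow> bool" where
  "simple_graph V E \<longleftrightarrow> finite V \<and> (\<forall>x y. E x y \<longrightarrow> E y x) \<and> (\<forall>x. \<not> E x x)"

definition is_clique :: "'a set \<Rightarrow> ('a \<Rightarrow> 'a \<Rightarrow> bool) \<Rightarrow> 'a set \<Rightarrow> bool" where
  "is_clique V E C \<longleftrightarrow> C \<subseteq> V \<and> (\<forall>x\<in>C. \<forall>y\<in>C. x \<noteq> y \<longrightarrow> E x y)"

definition indep_set :: "'a set \<Rightarrow> ('a \<Rightarrow> 'a \<Rightarrow> bool) \<Rightarrow> 'a set \<Rightarrow> bool" where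
  "indep_set V E S \<longleftrightarrow> S \<subseteq> V \<and> (\<forall>x\<in>S. \<forall>y\<in>S. \<not> E x y)"

definition maximal_indep_set :: "'a set \<Rightarrow> ('a \<Rightarrow> 'a \<Rightarrow> bool) \<Rightarrow> 'a set \<Rightarrow> bool" where
  "maximal_indep_set V E S \<longleftrightarrow> indep_set V E S \<and> (\<forall>T. indep_set V E T \<longrightarrow> S \<subseteq> T \<longrightarrow> T = S)"

definition alpha :: "'a set \<Rightarrow> ('a \<Rightarrow> 'a \<Rightarrow> bool) \<Rightarrow> nat" where
  "alpha V E = Max {card S | S. indep_set V E S}"

definition indep_domination :: "'a set \<Rightarrow> ('a \<Rightarrow> 'a \<Rightarrow> bool) \<Rightarrow> nat" where
  "indep_domination V E = Min {card S | S. maximal_indep_set V E S}"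

text \<open>Independence gap mu_alpha(G) = alpha(G) - i(G).\<close>
definition indep_gap :: "'a set \<Rightarrow> ('a \<Rightarrow> 'a \<Rightarrow> bool) \<Rightarrow> nat" where
  "indep_gap V E = alpha V E - indep_domination V E"

definition clique_cover_number :: "'a set \<Rightarrow> ('a \<Rightarrow> 'a \<Rightarrow> bool) \<Rightarrow> nat" where
  "clique_cover_number V E =
     Min {card \<C> | \<C>. finite \<C> \<and> (\<forall>C\<in>\<C>. is_clique V E C) \<and> \<Union>\<C> = V}"

definition semi_perfect :: "'a set \<Rightarrow> ('a \<Rightarrow> 'a \<Rightarrow> bool) \<Rightarrow> bool" where
  "semi_perfect V E \<longleftrightarrow> alpha V E = clique_cover_number V E"

definition clique_partition :: "'a set \<Rightarrow> ('a \<Rightarrow> 'a \<Rightarrow> bool) \<Rightarrow> 'a set set \<Rightarrow> bool" where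
  "clique_partition V E P \<longleftrightarrow>
     (\<forall>C\<in>P. is_clique V E C \<and> C \<noteq> {}) \<and>
     (\<forall>C\<in>P. \<forall>D\<in>P. C \<noteq> D \<longrightarrow> C \<inter> D = {}) \<and>
     \<Union>P = V"

definition alpha_clique_partition :: "'a set \<Rightarrow> ('a \<Rightarrow> 'a \<Rightarrow> bool) \<Rightarrow> 'a set set \<Rightarrow> bool" where
  "alpha_clique_partition V E P \<longleftrightarrow> clique_partition V E P \<and> card P = alpha V E"

definition k_tight :: "'a set \<Rightarrow> ('a \<Rightarrow> 'a \<Rightarrow> bool) \<Rightarrow> nat \<Rightarrow> 'a set set \<Rightarrow> bool" where
  "k_tight V E k P \<longleftrightarrow> clique_partition V E P \<and>
     (\<forall>F\<subseteq>P. card F = k \<longrightarrow> (\<forall>S. maximal_indep_set V E S \<longrightarrow> \<Union>F \<inter> S \<noteq> {}))"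

end

theory Submission
  imports Defs
begin

text \<open>In a clique partition P an independent set S meets every clique in at most one vertex,
so it meets exactly card S cliques and misses card P - card S of them. Hence P is k-tight
iff card P - i(G) < k, and applied to a maximum independent set this gives alpha(G) \<le> card P.
A minimum clique cover of a semi-perfect graph refines to a clique partition with alpha(G)
cliques, and the four conditions all reduce to alpha(G) - i(G) < k.\<close>

lemma clique_partition_finite: "finite V \<Longrightarrow> clique_partition V E P \<Longrightarrow> finite P"
  unfolding clique_partition_def by (metis finite_UnionD)

lemma card_clique_inter_indep_set_le_1:
  assumes "is_clique V E C" "indep_set V E S"
  shows "card (C \<inter> S) \<le> 1"
proof (cases "finite (C \<inter> S)")
  case True
  with assms show ?thesis
    unfolding is_clique_def indep_set_def One_nat_def card_le_Suc0_iff_eq[OF True] by blast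
qed simp

lemma card_cliques_meeting_indep_set:
  assumes P: "clique_partition V E P" and S: "indep_set V E S" and "finite V"
  shows "card {C\<in>P. C \<inter> S \<noteq> {}} = card S"
proof -
  have fin: "finite P" using clique_partition_finite[OF \<open>finite V\<close> P] .
  have finS: "finite S" using S \<open>finite V\<close> unfolding indep_set_def by (auto intro: finite_subset)
  have "\<Union>P = V" "S \<subseteq> V" using P S unfolding clique_partition_def indep_set_def by simp_all
  then have "S = (\<Union>C\<in>P. C \<inter> S)" by blast
  also have "card \<dots> = (\<Sum>C\<in>P. card (C \<inter> S))"
  proof (rule card_UN_disjoint[OF fin])
    show "\<forall>C\<in>P. finite (C \<inter> S)" using finS by simp
    show "\<forall>C\<in>P. \<forall>D\<in>P. C \<noteq> D \<longrightarrow> C \<inter> S \<inter> (D \<inter> S) = {}"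
      using P unfolding clique_partition_def by blast
  qed
  also have "\<dots> = (\<Sum>C\<in>P. if C \<inter> S \<noteq> {} then 1 else 0)"
  proof (rule sum.cong)
    fix C assume "C \<in> P"
    then have "is_clique V E C" using P by (simp add: clique_partition_def)
    then have "card (C \<inter> S) \<le> 1" using S by (rule card_clique_inter_indep_set_le_1)
    then show "card (C \<inter> S) = (if C \<inter> S \<noteq> {} then 1 else 0)"
      using finS by (auto simp: le_eq_less_or_eq)
  qed simp
  also have "\<dots> = card {C\<in>P. C \<inter> S \<noteq> {}}"
    using fin by (simp add: sum.inter_filter[symmetric])
  finally show ?thesis by simp
qed

lemma card_cliques_missing_indep_set:
  assumes "clique_partition V E P" "indep_set V E S" "finite V"
  shows "card {C\<in>P. C \<inter> S = {}} = card P - card S"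
proof -
  have "{C\<in>P. C \<inter> S = {}} = P - {C\<in>P. C \<inter> S \<noteq> {}}" by blast
  moreover have "finite {C\<in>P. C \<inter> S \<noteq> {}}"
    using clique_partition_finite[OF assms(3,1)] by simp
  ultimately show ?thesis
    using card_cliques_meeting_indep_set[OF assms] by (simp add: card_Diff_subset)
qed

lemma finite_card_indep_sets: "finite V \<Longrightarrow> finite {card S |S. indep_set V E S}"
  by (rule finite_subset[of _ "card ` Pow V"]) (auto simp: indep_set_def)

lemma card_le_alpha: "finite V \<Longrightarrow> indep_set V E S \<Longrightarrow> card S \<le> alpha V E"
  unfolding alpha_def by (rule Max_ge[OF finite_card_indep_sets]) auto

lemma alpha_attained: "finite V \<Longrightarrow> \<exists>S. indep_set V E S \<and> card S = alpha V E"
proof -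
  assume "finite V"
  moreover have "indep_set V E {}" by (simp add: indep_set_def)
  ultimately have "alpha V E \<in> {card S |S. indep_set V E S}"
    unfolding alpha_def by (intro Max_in finite_card_indep_sets) auto
  then show ?thesis by auto
qed

lemma alpha_le_card_clique_partition:
  assumes P: "clique_partition V E P" and "finite V"
  shows "alpha V E \<le> card P"
proof -
  obtain S where S: "indep_set V E S" "card S = alpha V E"
    using alpha_attained[OF \<open>finite V\<close>] by blast
  have "card S = card {C\<in>P. C \<inter> S \<noteq> {}}"
    using card_cliques_meeting_indep_set[OF P S(1) \<open>finite V\<close>] by simp
  also have "\<dots> \<le> card P"
    using clique_partition_finite[OF \<open>finite V\<close> P] by (intro card_mono) auto
  finally show ?thesis using S(2) by simp
qed

lemma maximum_indep_set_is_maximal: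
  assumes "finite V" "indep_set V E S" "card S = alpha V E"
  shows "maximal_indep_set V E S"
  unfolding maximal_indep_set_def
proof (intro conjI allI impI assms(2))
  fix T assume T: "indep_set V E T" "S \<subseteq> T"
  have "finite T" using T(1) \<open>finite V\<close> unfolding indep_set_def by (auto intro: finite_subset)
  moreover have "card T \<le> card S" using card_le_alpha[OF \<open>finite V\<close> T(1)] assms(3) by simp
  ultimately show "T = S" using T(2) card_seteq by blast
qed

lemma finite_card_maximal_indep_sets: "finite V \<Longrightarrow> finite {card S |S. maximal_indep_set V E S}"
  by (rule finite_subset[of _ "card ` Pow V"]) (auto simp: maximal_indep_set_def indep_set_def)

lemma indep_domination_le_card:
  "finite V \<Longrightarrow> maximal_indep_set V E S \<Longrightarrow> indep_domination V E \<le> card S"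
  unfolding indep_domination_def by (rule Min_le[OF finite_card_maximal_indep_sets]) auto

lemma indep_domination_attained:
  "finite V \<Longrightarrow> \<exists>S. maximal_indep_set V E S \<and> card S = indep_domination V E"
proof -
  assume "finite V"
  then obtain S where "indep_set V E S" "card S = alpha V E" using alpha_attained by blast
  then have "maximal_indep_set V E S" using maximum_indep_set_is_maximal \<open>finite V\<close> by blast
  then have "indep_domination V E \<in> {card S |S. maximal_indep_set V E S}"
    unfolding indep_domination_def
    by (intro Min_in finite_card_maximal_indep_sets[OF \<open>finite V\<close>]) auto
  then show ?thesis by auto
qed

lemma k_tight_iff_maximal_indep_sets_miss_few:
  assumes P: "clique_partition V E P" and "finite V"
  shows "k_tight V E k P \<longleftrightarrow> (\<forall>S. maximal_indep_set V E S \<longrightarrow> card P - card S < k)"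
proof -
  have missing: "card {C\<in>P. C \<inter> S = {}} = card P - card S" if "maximal_indep_set V E S" for S
    using card_cliques_missing_indep_set[OF P _ \<open>finite V\<close>] that
    unfolding maximal_indep_set_def by simp
  have "(\<forall>F\<subseteq>P. card F = k \<longrightarrow> \<Union>F \<inter> S \<noteq> {}) \<longleftrightarrow> card P - card S < k"
    if S: "maximal_indep_set V E S" for S
  proof
    assume hit: "\<forall>F\<subseteq>P. card F = k \<longrightarrow> \<Union>F \<inter> S \<noteq> {}"
    show "card P - card S < k"
    proof (rule ccontr)
      assume "\<not> card P - card S < k"
      then obtain F where F: "F \<subseteq> {C\<in>P. C \<inter> S = {}}" "card F = k"
        using missing[OF S] obtain_subset_with_card_n[of k "{C\<in>P. C \<inter> S = {}}"] by auto
      then have "F \<subseteq> P" "\<Union>F \<inter> S = {}" by auto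
      with hit F(2) show False by blast
    qed
  next
    assume few: "card P - card S < k"
    show "\<forall>F\<subseteq>P. card F = k \<longrightarrow> \<Union>F \<inter> S \<noteq> {}"
    proof (intro allI impI notI)
      fix F assume F: "F \<subseteq> P" "card F = k" "\<Union>F \<inter> S = {}"
      then have "F \<subseteq> {C\<in>P. C \<inter> S = {}}" by blast
      then have "card F \<le> card {C\<in>P. C \<inter> S = {}}"
        using clique_partition_finite[OF \<open>finite V\<close> P] by (intro card_mono) auto
      with F(2) few missing[OF S] show False by simp
    qed
  qed
  then show ?thesis using P unfolding k_tight_def by blast
qed

lemma k_tight_iff_card_minus_indep_domination:
  assumes "clique_partition V E P" "finite V"
  shows "k_tight V E k P \<longleftrightarrow> card P - indep_domination V E < k"
  unfolding k_tight_iff_maximal_indep_sets_miss_few[OF assms]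
proof
  assume "\<forall>S. maximal_indep_set V E S \<longrightarrow> card P - card S < k"
  then show "card P - indep_domination V E < k"
    using indep_domination_attained[OF assms(2), of E] by auto
next
  assume "card P - indep_domination V E < k"
  then show "\<forall>S. maximal_indep_set V E S \<longrightarrow> card P - card S < k"
    using indep_domination_le_card[OF assms(2)] by (meson diff_le_mono2 le_less_trans)
qed

lemma is_clique_subset: "is_clique V E C \<Longrightarrow> C' \<subseteq> C \<Longrightarrow> C' \<subseteq> W \<Longrightarrow> is_clique W E C'"
  unfolding is_clique_def by blast

lemma clique_cover_refines_to_partition:
  assumes "finite CC" "\<forall>C\<in>CC. is_clique V E C"
  shows "\<exists>P. clique_partition (\<Union>CC) E P \<and> finite P \<and> card P \<le> card CC"
  using assms
proof (induction CC rule: finite_induct)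
  case empty
  have "clique_partition {} E {}" by (simp add: clique_partition_def)
  then show ?case by auto
next
  case (insert C CC)
  have "\<forall>C\<in>CC. is_clique V E C" using insert.prems by simp
  then have "\<exists>P. clique_partition (\<Union>CC) E P \<and> finite P \<and> card P \<le> card CC"
    by (rule insert.IH)
  then obtain P where P: "clique_partition (\<Union>CC) E P" "finite P" "card P \<le> card CC"
    by blast
  have cliques: "\<forall>X\<in>P. is_clique (\<Union>CC) E X \<and> X \<noteq> {}"
    and disjoint: "\<forall>X\<in>P. \<forall>Y\<in>P. X \<noteq> Y \<longrightarrow> X \<inter> Y = {}"
    and union: "\<Union>P = \<Union>CC"
    using P(1) by (simp_all add: clique_partition_def)
  show ?case
  proof (cases "C \<subseteq> \<Union>CC")
    case True
    then have "\<Union>(insert C CC) = \<Union>CC" by blast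
    moreover have "card CC \<le> card (insert C CC)" using insert(1) by (simp add: card_insert_le)
    ultimately show ?thesis using P by auto
  next
    case False
    define D where "D = C - \<Union>CC"
    have "is_clique V E C" using insert.prems by simp
    then have "is_clique (\<Union>(insert C CC)) E D"
      by (rule is_clique_subset) (auto simp: D_def)
    moreover have "\<forall>X\<in>P. is_clique (\<Union>(insert C CC)) E X \<and> X \<noteq> {}"
    proof
      fix X assume "X \<in> P"
      with cliques have "is_clique (\<Union>CC) E X" "X \<noteq> {}" by auto
      then show "is_clique (\<Union>(insert C CC)) E X \<and> X \<noteq> {}"
        by (auto simp: is_clique_def)
    qed
    moreover have "\<forall>X\<in>P. D \<inter> X = {} \<and> X \<inter> D = {}"
      using union unfolding D_def by blast
    moreover have "D \<noteq> {}" "\<Union>(insert D P) = \<Union>(insert C CC)"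
      using False union unfolding D_def by auto
    ultimately have "clique_partition (\<Union>(insert C CC)) E (insert D P)"
      using disjoint unfolding clique_partition_def by simp
    moreover have "card (insert D P) \<le> card (insert C CC)"
      using P(2,3) insert(1,2) by (simp add: card_insert_if)
    ultimately show ?thesis using P(2) by blast
  qed
qed

lemma alpha_clique_partition_exists:
  assumes "finite V" "semi_perfect V E"
  shows "\<exists>P. alpha_clique_partition V E P"
proof -
  define covers where
    "covers = {card \<C> | \<C>. finite \<C> \<and> (\<forall>C\<in>\<C>. is_clique V E C) \<and> \<Union>\<C> = V}"
  have "covers \<subseteq> card ` Pow (Pow V)"
    unfolding covers_def by blast
  then have "finite covers" using assms(1) finite_subset by blast
  moreover have "card ((\<lambda>v. {v}) ` V) \<in> covers"
    unfolding covers_def using assms(1)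
    by (intro CollectI exI[of _ "(\<lambda>v. {v}) ` V"]) (auto simp: is_clique_def)
  ultimately have "clique_cover_number V E \<in> covers"
    unfolding clique_cover_number_def covers_def[symmetric] by (intro Min_in) auto
  then obtain CC where CC: "finite CC" "\<forall>C\<in>CC. is_clique V E C" "\<Union>CC = V"
      "card CC = clique_cover_number V E"
    unfolding covers_def mem_Collect_eq by (metis (no_types))
  obtain P where P: "clique_partition V E P" "card P \<le> card CC"
    using clique_cover_refines_to_partition[OF CC(1,2)] CC(3) by blast
  have "card P = alpha V E"
    using alpha_le_card_clique_partition[OF P(1) assms(1)] P(2) CC(4) assms(2)
    unfolding semi_perfect_def by linarith
  with P(1) show ?thesis unfolding alpha_clique_partition_def by blast
qed

theorem mainTheorem4:
  fixes V :: "'a set" and E :: "'a \<Rightarrow> 'a \<Rightarrow> bool" and k :: nat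
  assumes "simple_graph V E"
    and "semi_perfect V E"
    and "k \<ge> 1"
  shows "((\<exists>P. k_tight V E k P) \<longleftrightarrow> (\<exists>P. alpha_clique_partition V E P \<and> k_tight V E k P))
       \<and> ((\<exists>P. alpha_clique_partition V E P \<and> k_tight V E k P) \<longleftrightarrow>
            (\<forall>P. alpha_clique_partition V E P \<longrightarrow> k_tight V E k P))
       \<and> ((\<forall>P. alpha_clique_partition V E P \<longrightarrow> k_tight V E k P) \<longleftrightarrow> indep_gap V E \<le> k - 1)"
proof -
  have fin: "finite V" using assms(1) unfolding simple_graph_def by simp
  have tight_gap: "indep_gap V E \<le> k - 1" if "k_tight V E k P" for P
  proof -
    have P: "clique_partition V E P" using that unfolding k_tight_def by simp
    show ?thesis
      using alpha_le_card_clique_partition[OF P fin] that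
      unfolding k_tight_iff_card_minus_indep_domination[OF P fin] indep_gap_def by linarith
  qed
  have gap_tight: "k_tight V E k P" if "indep_gap V E \<le> k - 1" "alpha_clique_partition V E P" for P
    using that assms(3) fin k_tight_iff_card_minus_indep_domination
    unfolding alpha_clique_partition_def indep_gap_def by fastforce
  obtain Q where "alpha_clique_partition V E Q"
    using alpha_clique_partition_exists[OF fin assms(2)] by blast
  with tight_gap gap_tight show ?thesis by blast
qed

end
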